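(* Let $\mathcal S\subseteq\mathcal X\cup\mathcal Y\cup\mathcal Z$ be a set of items with $w_Z(\mathcal S)\le t-1$, $w_Y(\mathcal S)\le T$, $p_Z(\mathcal S)\ge t-1$, $p_Y(\mathcal S)\ge T$, and such that there is no set $\mathcal S'\subseteq\mathcal X\cup\mathcal Y\cup\mathcal Z$ with $w(\mathcal S')\le w(\mathcal S)$ and $p(\mathcal S')>p(\mathcal S)$. Then there exists $i\in\{0,\dots,t-1\}$ with $\mathcal S\cap\mathcal Y=\mathcal Y_i$ and $\mathcal S\cap\mathcal Z=\mathcal Z_i$.
   Context: Let $n\ge1$, $B_n=\sum_{j=1}^{3n}(3n+1)^j$, $\widetilde{\mathcal A}_n=\{(3n+1)^{j_1}+(3n+1)^{j_2}+(3n+1)^{j_3}: j_1,j_2,j_3\in\{1,\dots,3n\}\}$. Let $t$ be a power of two, $\lg$ the base-2 logarithm, and for $i\in\{0,\dots,t-1\}$ let $\mathcal A_i=\{a^i_1,\dots,a^i_{3n}\}$ be a set of $3n$ integers from $\widetilde{\mathcal A}_n$ with sum $3B_n$. Let $X=3tnB_n$, $B=B_n+nX$, $Y=3t^2nB$, $Z=(\lg t)^2Y^2 3^{(\lg t)^2}$, $T=\sum_{k=0}^{(\lg t)^2-1}3^k$, and fix a bijection $f:\{0,\dots,\lg t-1\}^2\to\{0,\dots,(\lg t)^2-1\}$. Items (weight $w$, profit $p$): encoding items $x^i_j$ ($0\le i\le t-1$, $1\le j\le 3n$) with $w=X+a^i_j$, $p=X+a^i_j+3iB$, forming $\mathcal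 X$; quadratization items forming $\mathcal Y$: for $0\le k<\ell\le\lg t-1$, $y^{1,0}_{k,\ell}$ with $w=p=3^{f(k,\ell)}Y$, $y^{0,1}_{k,\ell}$ with $w=p=3^{f(\ell,k)}Y$, $y^{1,1}_{k,\ell}$ with $w=(3^{f(k,\ell)}+3^{f(\ell,k)})Y$, $p=w+2^{k+\ell}\cdot9nB$, and for $0\le k\le\lg t-1$, $y^{1,1}_{k,k}$ with $w=3^{f(k,k)}Y$, $p=w+2^{2k}\cdot4.5nB+2^k\cdot1.5nB$; index items forming $\mathcal Z$: for $0\le k\le\lg t-1$, $z^0_k$ with $w=p=2^kZ+\sum_{\ell=0}^{\lg t-1}3^{f(k,\ell)}Y$ and $z^1_k$ with $w=p=2^kZ+2^k\cdot 3B$. For a set $\mathcal S$ of items, $w(\mathcal S)=\sum_{x\in\mathcal S}w(x)$, $p(\mathcal S)=\sum_{x\in\mathcal S}p(x)$. For an item $x$: $w_Z(x)=\lfloor w(x)/Z\rfloor$, $p_Z(x)=\lfloor p(x)/Z\rfloor$, $w_Y(x)=\lfloor (w(x)-Z\,w_Z(x))/Y\rfloor$, $p_Y(x)=\lfloor (p(x)-Z\,p_Z(x))/Y\rfloor$; these are extended to sets of items by summation over the items. For $i\in\{0,\dots,t-1\}$ with binary digits $i(0),\dots,i(\lg t-1)$ ($i=\sum_k i(k)2^k$): $\mathcal Z_i=\{z^{i(k)}_k:0\le k\le\lg t-1\}$ and $\mathcal Y_i=\{y^{i(k),i(\ell)}_{k,\ell}:0\le k\le\ell\le\lg t-1,\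 (i(k),i(\ell))\neq(0,0)\}$. *)

theory Defs
  imports Main "HOL.Real"
begin

text \<open>Items of the knapsack instance.
  XI i j   = x^i_j;
  YI b c k l = y^{b,c}_{k,l};
  ZI b k   = z^b_k.\<close>
datatype item = XI nat nat | YI nat nat nat nat | ZI nat nat

definition Bn :: "nat \<Rightarrow> nat" where
  "Bn n = (\<Sum>j=1..3*n. (3*n+1)^j)"

definition Atilde :: "nat \<Rightarrow> nat set" where
  "Atilde n = {(3*n+1)^j1 + (3*n+1)^j2 + (3*n+1)^j3 | j1 j2 j3.
                 j1 \<in> {1..3*n} \<and> j2 \<in> {1..3*n} \<and> j3 \<in> {1..3*n}}"

definition Xc :: "nat \<Rightarrow> nat \<Rightarrow> nat" where
  "Xc n L = 3 * 2^L * n * Bn n"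

definition Bc :: "nat \<Rightarrow> nat \<Rightarrow> nat" where
  "Bc n L = Bn n + n * Xc n L"

definition Yc :: "nat \<Rightarrow> nat \<Rightarrow> nat" where
  "Yc n L = 3 * (2^L)^2 * n * Bc n L"

definition Zc :: "nat \<Rightarrow> nat \<Rightarrow> nat" where
  "Zc n L = L^2 * (Yc n L)^2 * 3^(L^2)"

definition Tc :: "nat \<Rightarrow> nat" where
  "Tc L = (\<Sum>k<L^2. 3^k)"

definition Xset :: "nat \<Rightarrow> nat \<Rightarrow> item set" where
  "Xset n L = {XI i j | i j. i < 2^L \<and> j \<in> {1..3*n}}"

definition Yset :: "nat \<Rightarrow> item set" where
  "Yset L = {YI 1 0 k l | k l. k < l \<and> l < L}
          \<union> {YI 0 1 k l | k l. k < l \<and> l < L}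
          \<union> {YI 1 1 k l | k l. k < l \<and> l < L}
          \<union> {YI 1 1 k k | k. k < L}"

definition Zset :: "nat \<Rightarrow> item set" where
  "Zset L = {ZI b k | b k. b \<in> {0,1} \<and> k < L}"

text \<open>Weight and profit (values outside the instance are irrelevant and set to 0).\<close>
fun wt :: "nat \<Rightarrow> nat \<Rightarrow> (nat \<Rightarrow> nat \<Rightarrow> nat) \<Rightarrow> (nat \<times> nat \<Rightarrow> nat) \<Rightarrow> item \<Rightarrow> real" where
  "wt n L a f (XI i j) = real (Xc n L) + real (a i j)"
| "wt n L a f (YI b c k l) =
     (if b = 1 \<and> c = 0 then 3^(f (k,l)) * real (Yc n L)
      else if b = 0 \<and> c = 1 then 3^(f (l,k)) * real (Yc n L)
      else if b = 1 \<and> c = 1 \<and> k < l then (3^(f (k,l)) + 3^(f (l,k))) * real (Yc n L)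
      else if b = 1 \<and> c = 1 \<and> k = l then 3^(f (k,k)) * real (Yc n L)
      else 0)"
| "wt n L a f (ZI b k) =
     (if b = 0 then 2^k * real (Zc n L) + (\<Sum>l<L. 3^(f (k,l)) * real (Yc n L))
      else if b = 1 then 2^k * real (Zc n L) + 2^k * 3 * real (Bc n L)
      else 0)"

fun pr :: "nat \<Rightarrow> nat \<Rightarrow> (nat \<Rightarrow> nat \<Rightarrow> nat) \<Rightarrow> (nat \<times> nat \<Rightarrow> nat) \<Rightarrow> item \<Rightarrow> real" where
  "pr n L a f (XI i j) = real (Xc n L) + real (a i j) + 3 * real i * real (Bc n L)"
| "pr n L a f (YI b c k l) =
     (if b = 1 \<and> c = 1 \<and> k < l then
        wt n L a f (YI b c k l) + 2^(k+l) * 9 * real n * real (Bc n L)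
      else if b = 1 \<and> c = 1 \<and> k = l then
        wt n L a f (YI b c k l) + 2^(2*k) * 4.5 * real n * real (Bc n L)
                                + 2^k * 1.5 * real n * real (Bc n L)
      else wt n L a f (YI b c k l))"
| "pr n L a f (ZI b k) = wt n L a f (ZI b k)"

definition wZ :: "nat \<Rightarrow> nat \<Rightarrow> (nat \<Rightarrow> nat \<Rightarrow> nat) \<Rightarrow> (nat \<times> nat \<Rightarrow> nat) \<Rightarrow> item \<Rightarrow> int" where
  "wZ n L a f x = \<lfloor>wt n L a f x / real (Zc n L)\<rfloor>"

definition pZ :: "nat \<Rightarrow> nat \<Rightarrow> (nat \<Rightarrow> nat \<Rightarrow> nat) \<Rightarrow> (nat \<times> nat \<Rightarrow> nat) \<Rightarrow> item \<Rightarrow> int" where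
  "pZ n L a f x = \<lfloor>pr n L a f x / real (Zc n L)\<rfloor>"

definition wY :: "nat \<Rightarrow> nat \<Rightarrow> (nat \<Rightarrow> nat \<Rightarrow> nat) \<Rightarrow> (nat \<times> nat \<Rightarrow> nat) \<Rightarrow> item \<Rightarrow> int" where
  "wY n L a f x = \<lfloor>(wt n L a f x - real (Zc n L) * of_int (wZ n L a f x)) / real (Yc n L)\<rfloor>"

definition pY :: "nat \<Rightarrow> nat \<Rightarrow> (nat \<Rightarrow> nat \<Rightarrow> nat) \<Rightarrow> (nat \<times> nat \<Rightarrow> nat) \<Rightarrow> item \<Rightarrow> int" where
  "pY n L a f x = \<lfloor>(pr n L a f x - real (Zc n L) * of_int (pZ n L a f x)) / real (Yc n L)\<rfloor>"

definition bitd :: "nat \<Rightarrow> nat \<Rightarrow> nat" where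
  "bitd i k = (i div 2^k) mod 2"

definition Zi :: "nat \<Rightarrow> nat \<Rightarrow> item set" where
  "Zi L i = {ZI (bitd i k) k | k. k < L}"

definition Yi :: "nat \<Rightarrow> nat \<Rightarrow> item set" where
  "Yi L i = {YI (bitd i k) (bitd i l) k l | k l.
               k \<le> l \<and> l < L \<and> (bitd i k, bitd i l) \<noteq> (0, 0)}"

end

theory Submission
  imports Defs
begin

text \<open>Weight and profit of every item x have the form Z z(x) + Y y(x) + r with 0 \<le> r < Y,
  where z(x) is a sum of distinct powers 2^k and y(x) a sum of distinct powers 3^(f(k,l)); so
  w_Z = p_Z = z and w_Y = p_Y = y on items. The hypotheses then say that the z-parts of S add up to
  2^(lg t) - 1 = \<Sum>k 2^k and the y-parts to T = \<Sum>m 3^m. Each power 2^k occurs in at most two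
  items and each power 3^(f(k,l)) in at most three, so there are no carries and every power is
  contributed by exactly one item of S. Optimality forbids choosing both y^{1,0}_{k,l} and
  y^{0,1}_{k,l}: trading them for y^{1,1}_{k,l} keeps the weight and gains profit. What is left is
  exactly the pattern Y_i, Z_i for the i whose k-th bit records whether z^1_k \<in> S.\<close>

lemma repunit_digits_eq_1:
  fixes b :: nat
  assumes "b \<ge> 2" "\<forall>k<N. c k \<le> b" "(\<Sum>k<N. c k * b^k) = (\<Sum>k<N. b^k)"
  shows "\<forall>k<N. c k = 1"
  using assms(2,3)
proof (induction N arbitrary: c)
  case 0
  then show ?case by simp
next
  case (Suc N)
  have sum_shift: "(\<Sum>k<Suc N. d k * b^k) = d 0 + b * (\<Sum>k<N. d (Suc k) * b^k)" for d
    by (simp add: sum.lessThan_Suc_shift sum_distrib_left ac_simps del: sum.lessThan_Suc)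
  have eq: "c 0 + b * (\<Sum>k<N. c (Suc k) * b^k) = 1 + b * (\<Sum>k<N. b^k)"
    using Suc.prems(2) sum_shift[of c] sum_shift[of "\<lambda>_. 1"] by simp
  then have "c 0 mod b = 1"
    using assms(1) by (metis mod_mult_self2 mod_less mult.commute Suc_1 Suc_le_lessD)
  with Suc.prems(1) assms(1) have c0: "c 0 = 1"
    by (metis le_neq_implies_less mod_less mod_self zero_less_Suc zero_neq_one)
  with eq assms(1) have "(\<Sum>k<N. c (Suc k) * b^k) = (\<Sum>k<N. b^k)" by simp
  with Suc.prems(1) have "\<forall>k<N. c (Suc k) = 1" by (intro Suc.IH) auto
  with c0 show ?case by (auto simp: less_Suc_eq_0_disj)
qed

lemma repunit_digits_eq_1_reindex:
  fixes b :: nat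
  assumes "b \<ge> 2" "bij_betw e I {..<N}" "\<forall>i\<in>I. c i \<le> b"
    and "(\<Sum>i\<in>I. c i * b^(e i)) = (\<Sum>i\<in>I. b^(e i))"
  shows "\<forall>i\<in>I. c i = 1"
proof -
  define d where "d = c \<circ> inv_into I e"
  have c_eq: "c i = d (e i)" if "i \<in> I" for i
    using assms(2) that by (simp add: d_def bij_betw_inv_into_left)
  have reindex: "(\<Sum>i\<in>I. g (e i)) = (\<Sum>m<N. g m)" for g :: "nat \<Rightarrow> nat"
    using sum.reindex_bij_betw[OF assms(2)] .
  have "\<forall>m<N. d m = 1"
  proof (rule repunit_digits_eq_1[OF assms(1)])
    show "\<forall>m<N. d m \<le> b"
      using assms(2,3) by (auto simp: d_def bij_betw_def inv_into_into)
    show "(\<Sum>m<N. d m * b^m) = (\<Sum>m<N. b^m)"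
      using assms(4) c_eq
      by (simp add: reindex[of "\<lambda>m. d m * b^m", symmetric] reindex[of "\<lambda>m. b^m", symmetric])
  qed
  then show ?thesis
    using assms(2) c_eq bij_betwE by fastforce
qed

lemma sum_powers_of_3_less: "(\<Sum>k<N. (3::nat) ^ k) < 3 ^ N"
proof -
  have "2 * (\<Sum>k<N. (3::nat) ^ k) + 1 = 3 ^ N"
    by (induction N) auto
  then show ?thesis by linarith
qed

lemma sum_sum_incidence:
  assumes "finite S" "finite P"
  shows "(\<Sum>x\<in>S. \<Sum>p\<in>P \<inter> R x. h p) = (\<Sum>p\<in>P. card {x\<in>S. p \<in> R x} * (h p :: nat))"
proof -
  have "(\<Sum>x\<in>S. \<Sum>p\<in>P \<inter> R x. h p) = (\<Sum>x\<in>S. \<Sum>p\<in>P. if p \<in> R x then h p else 0)"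
    using assms(2) by (simp add: sum.inter_restrict Int_commute)
  also have "\<dots> = (\<Sum>p\<in>P. \<Sum>x\<in>S. if p \<in> R x then h p else 0)"
    by (rule sum.swap)
  also have "\<dots> = (\<Sum>p\<in>P. card {x\<in>S. p \<in> R x} * h p)"
    using assms(1) by (simp add: sum.If_cases Collect_conj_eq)
  finally show ?thesis .
qed

lemma floor_mixed_radix:
  fixes v Z Y :: real and z y :: nat
  assumes "Z * z + Y * y \<le> v" "v < Z * z + Y * (y + 1)" "Y * (y + 1) \<le> Z"
  shows "\<lfloor>v / Z\<rfloor> = z" and "\<lfloor>(v - Z * z) / Y\<rfloor> = y"
proof -
  have "Y > 0" using assms(1,2) by (simp add: algebra_simps)
  then have "Z > 0"
    using assms(3) by (smt (verit) mult_pos_pos of_nat_0_less_iff zero_less_Suc Suc_eq_plus1)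
  have "0 \<le> Y * y"
    using \<open>Y > 0\<close> by simp
  then have "Z * z \<le> v"
    using assms(1) by linarith
  moreover have "v < Z * (z + 1)"
    using assms(2,3) by (simp add: algebra_simps)
  ultimately show "\<lfloor>v / Z\<rfloor> = z"
    using \<open>Z > 0\<close> by (simp add: floor_eq_iff pos_le_divide_eq pos_divide_less_eq algebra_simps)
  have "Y * y \<le> v - Z * z" "v - Z * z < Y * (y + 1)"
    using assms by simp_all
  with \<open>Y > 0\<close> show "\<lfloor>(v - Z * z) / Y\<rfloor> = y"
    by (simp add: floor_eq_iff pos_le_divide_eq pos_divide_less_eq algebra_simps)
qed

lemma card_Int_pair_eq_1:
  "a \<noteq> b \<Longrightarrow> card (S \<inter> {a, b}) = 1 \<longleftrightarrow> (a \<in> S \<longleftrightarrow> b \<notin> S)"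
  by (auto simp: Int_insert_right)

lemma card_Int_triple_eq_1:
  "distinct [a, b, c] \<Longrightarrow> card (S \<inter> {a, b, c}) = 1 \<longleftrightarrow>
     (a \<in> S \<and> b \<notin> S \<and> c \<notin> S) \<or> (a \<notin> S \<and> b \<in> S \<and> c \<notin> S) \<or> (a \<notin> S \<and> b \<notin> S \<and> c \<in> S)"
  by (auto simp: Int_insert_right)

lemma bitd_horner_sum:
  assumes "k < length bs"
  shows "bitd (horner_sum of_bool 2 bs) k = of_bool (bs ! k)"
  using assms bit_horner_sum_bit_iff[of bs k, where 'a = nat]
  by (simp add: bitd_def bit_iff_odd possible_bit_def flip: of_bool_odd_eq_mod_2)

lemma horner_sum_bits_less: "horner_sum of_bool 2 bs < (2::nat) ^ length bs"
  by (metis take_bit_horner_sum_bit_eq take_all_iff order_refl take_bit_nat_less_exp)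

lemma double_power2_le: "k < L \<Longrightarrow> 2 * 2^k \<le> (2::real)^L"
  using power_increasing[of "Suc k" L "2::real"] by simp

lemma Atilde_le: "x \<in> Atilde n \<Longrightarrow> x \<le> 3 * Bn n"
proof -
  have pow_le: "(3*n+1)^j \<le> Bn n" if "j \<in> {1..3*n}" for j
    unfolding Bn_def using that by (intro member_le_sum) auto
  assume "x \<in> Atilde n"
  then obtain j1 j2 j3 where "x = (3*n+1)^j1 + (3*n+1)^j2 + (3*n+1)^j3"
    and "j1 \<in> {1..3*n}" "j2 \<in> {1..3*n}" "j3 \<in> {1..3*n}"
    unfolding Atilde_def by blast
  then show ?thesis
    using pow_le[of j1] pow_le[of j2] pow_le[of j3] by linarith
qed

lemma Bc_ge:
  assumes "n \<ge> 1"
  shows "Xc n L \<le> Bc n L" "Bn n \<le> Bc n L" "1 \<le> Bc n L"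
proof -
  have "Xc n L \<le> n * Xc n L" using assms by simp
  moreover have "1 \<le> Bn n"
    unfolding Bn_def using assms by (intro le_trans[OF _ member_le_sum[of 1]]) auto
  ultimately show "Xc n L \<le> Bc n L" "Bn n \<le> Bc n L" "1 \<le> Bc n L"
    unfolding Bc_def by linarith+
qed

lemma wt_le_pr: "wt n L a f x \<le> pr n L a f x"
  by (cases x) auto

lemma item_cases:
  assumes "x \<in> Xset n L \<union> Yset L \<union> Zset L"
  obtains (X) i j where "x = XI i j" "i < 2^L" "j \<in> {1..3*n}"
    | (Y10) k l where "x = YI 1 0 k l" "k < l" "l < L"
    | (Y01) k l where "x = YI 0 1 k l" "k < l" "l < L"
    | (Y11) k l where "x = YI 1 1 k l" "k < l" "l < L"
    | (Y11_diag) k where "x = YI 1 1 k k" "k < L"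
    | (Z0) k where "x = ZI 0 k" "k < L"
    | (Z1) k where "x = ZI 1 k" "k < L"
  using assms unfolding Xset_def Yset_def Zset_def by blast

lemma finite_items: "finite (Xset n L \<union> Yset L \<union> Zset L)"
proof -
  have "Xset n L \<subseteq> (\<lambda>(i, j). XI i j) ` ({..<2^L} \<times> {1..3*n})"
    unfolding Xset_def by auto
  moreover have "Yset L \<subseteq> (\<lambda>(b, c, k, l). YI b c k l) ` ({0, 1} \<times> {0, 1} \<times> {..<L} \<times> {..<L})"
    unfolding Yset_def by (auto simp: image_iff)
  moreover have "Zset L \<subseteq> (\<lambda>(b, k). ZI b k) ` ({0, 1} \<times> {..<L})"
    unfolding Zset_def by auto
  ultimately show ?thesis
    by (simp add: finite_subset)
qed

text \<open>zdigit and ydigit are the parts z(x) and y(x) above; zpositions and ypositions list the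
  exponents k resp. the pairs (k,l) occurring in them.\<close>

fun zpositions :: "item \<Rightarrow> nat set" where
  "zpositions (ZI b k) = {k}"
| "zpositions _ = {}"

fun ypositions :: "item \<Rightarrow> (nat \<times> nat) set" where
  "ypositions (XI i j) = {}"
| "ypositions (YI b c k l) =
     (if b = 1 \<and> c = 0 then {(k, l)} else if b = 0 \<and> c = 1 then {(l, k)}
      else if b = 1 \<and> c = 1 then {(k, l), (l, k)} else {})"
| "ypositions (ZI b k) = (if b = 0 then {k} \<times> UNIV else {})"

definition zdigit :: "nat \<Rightarrow> item \<Rightarrow> nat" where
  "zdigit L x = (\<Sum>k \<in> {..<L} \<inter> zpositions x. 2 ^ k)"

definition ydigit :: "nat \<Rightarrow> (nat \<times> nat \<Rightarrow> nat) \<Rightarrow> item \<Rightarrow> nat" where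
  "ydigit L f x = (\<Sum>p \<in> ({..<L} \<times> {..<L}) \<inter> ypositions x. 3 ^ f p)"

definition zcolumn :: "nat \<Rightarrow> item set" where
  "zcolumn k = {ZI 0 k, ZI 1 k}"

fun ycolumn :: "nat \<times> nat \<Rightarrow> item set" where
  "ycolumn (k, l) = insert (ZI 0 k)
     (if k < l then {YI 1 0 k l, YI 1 1 k l} else if l < k then {YI 0 1 l k, YI 1 1 l k}
      else {YI 1 1 k k})"

lemma zpositions_iff_zcolumn:
  "x \<in> Xset n L \<union> Yset L \<union> Zset L \<Longrightarrow> k \<in> zpositions x \<longleftrightarrow> x \<in> zcolumn k"
  by (auto simp: Xset_def Yset_def Zset_def zcolumn_def)

lemma ypositions_iff_ycolumn:
  "x \<in> Xset n L \<union> Yset L \<union> Zset L \<Longrightarrow> p \<in> ypositions x \<longleftrightarrow> x \<in> ycolumn p"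
  by (cases p) (auto simp: Xset_def Yset_def Zset_def)

lemma card_Int_zcolumn_le: "card (S \<inter> zcolumn k) \<le> 2"
proof -
  have "card (S \<inter> zcolumn k) \<le> card (zcolumn k)"
    by (rule card_mono) (auto simp: zcolumn_def)
  then show ?thesis by (simp add: zcolumn_def)
qed

lemma card_Int_ycolumn_le: "card (S \<inter> ycolumn p) \<le> 3"
proof -
  obtain k l where p: "p = (k, l)" by fastforce
  have "card (S \<inter> ycolumn p) \<le> card (ycolumn p)"
    by (rule card_mono) (simp_all add: p)
  also have "\<dots> \<le> 3"
    unfolding p by (simp add: card_insert_le_m1)
  finally show ?thesis .
qed

lemma ydigit_ZI0: "k < L \<Longrightarrow> ydigit L f (ZI 0 k) = (\<Sum>l<L. 3 ^ f (k, l))"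
proof -
  assume "k < L"
  then have "({..<L} \<times> {..<L}) \<inter> ({k} \<times> UNIV) = Pair k ` {..<L}" by auto
  then show ?thesis by (simp add: ydigit_def sum.reindex inj_on_def)
qed

lemma weight_ge_digits:
  assumes "x \<in> Xset n L \<union> Yset L \<union> Zset L"
  shows "real (Zc n L) * zdigit L x + real (Yc n L) * ydigit L f x \<le> wt n L a f x"
  using assms
proof (cases rule: item_cases)
  case (Z0 k)
  then show ?thesis by (simp add: zdigit_def ydigit_ZI0 sum_distrib_left ac_simps)
qed (auto simp: zdigit_def ydigit_def algebra_simps)

locale knapsack_instance =
  fixes n L :: nat and a :: "nat \<Rightarrow> nat \<Rightarrow> nat" and f :: "nat \<times> nat \<Rightarrow> nat"
  assumes n_pos: "n \<ge> 1" and L_pos: "L \<ge> 1"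
    and a_Atilde: "\<forall>i<2^L. \<forall>j\<in>{1..3*n}. a i j \<in> Atilde n"
    and f_bij: "bij_betw f ({..<L} \<times> {..<L}) {..<L^2}"
begin

abbreviation items :: "item set" where
  "items \<equiv> Xset n L \<union> Yset L \<union> Zset L"

lemma less_Yc:
  fixes c :: real
  assumes "c < 3 * (2^L)^2"
  shows "c * n * Bc n L < Yc n L"
proof -
  have "0 < real n * Bc n L" using n_pos Bc_ge(3)[OF n_pos, of L] by simp
  with assms have "c * (real n * Bc n L) < 3 * (2^L)^2 * (real n * Bc n L)"
    by (rule mult_strict_right_mono)
  then show ?thesis unfolding Yc_def by (simp add: ac_simps)
qed

lemma Yc_pos: "0 < Yc n L"
  using less_Yc[of 0] by simp

lemma profit_less_digits:
  assumes "x \<in> items"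
  shows "pr n L a f x < real (Zc n L) * zdigit L x + real (Yc n L) * (ydigit L f x + 1)"
  using assms
proof (cases rule: item_cases)
  case (X i j)
  have "a i j \<le> 3 * Bn n" using X a_Atilde Atilde_le by blast
  then have "real (Xc n L) + a i j + 3 * real i * Bc n L \<le> (3 * real i + 4) * Bc n L"
    using Bc_ge(1,2)[OF n_pos, of L] by (simp add: algebra_simps)
  also have "\<dots> \<le> (3 * real i + 4) * n * Bc n L"
    using n_pos by (simp add: mult_right_mono)
  also have "\<dots> < Yc n L"
  proof (rule less_Yc)
    have "2 \<le> (2::real)^L"
      using double_power2_le[of 0] L_pos by simp
    then have "2 * 2^L \<le> ((2::real)^L)^2"
      by (simp add: power2_eq_square mult_right_mono)
    moreover have "real (i + 1) \<le> 2^L"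
      using X(2) by (metis Suc_eq_plus1 Suc_leI of_nat_le_iff of_nat_numeral of_nat_power)
    ultimately show "3 * real i + 4 < 3 * (2^L)^2"
      using \<open>2 \<le> 2^L\<close> by simp
  qed
  finally show ?thesis using X by (simp add: zdigit_def ydigit_def)
next
  case (Y10 k l)
  then show ?thesis using Yc_pos by (simp add: zdigit_def ydigit_def algebra_simps)
next
  case (Y01 k l)
  then show ?thesis using Yc_pos by (simp add: zdigit_def ydigit_def algebra_simps)
next
  case (Z0 k)
  then show ?thesis using Yc_pos by (simp add: zdigit_def ydigit_ZI0 sum_distrib_left algebra_simps)
next
  case (Y11 k l)
  have "2 * 2^k \<le> (2::real)^L" "2 * 2^l \<le> (2::real)^L"
    using double_power2_le Y11 by auto
  then have "4 * 2^(k+l) \<le> ((2::real)^L)^2"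
    using mult_mono[of "2 * 2^k" "(2::real)^L" "2 * 2^l" "2^L"] by (simp add: power_add power2_eq_square)
  then have "2^(k+l) * 9 * real n * Bc n L < Yc n L"
    using zero_less_power[of "2::real" "k+l"] by (intro less_Yc) linarith
  then show ?thesis using Y11 by (simp add: zdigit_def ydigit_def insert_commute algebra_simps)
next
  case (Y11_diag k)
  have "2 * 2^k \<le> (2::real)^L" using double_power2_le Y11_diag by simp
  then have "4 * 2^(2*k) \<le> ((2::real)^L)^2"
    using power_mono[of "2 * 2^k" "(2::real)^L" 2] by (simp add: power_even_eq power2_eq_square)
  moreover have "(2::real)^L \<le> (2^L)^2" by (simp add: power2_eq_square)
  ultimately have "(2^(2*k) * 4.5 + 2^k * 1.5) * real n * Bc n L < Yc n L"
    using \<open>2 * 2^k \<le> 2^L\<close> zero_less_power[of "2::real" L] by (intro less_Yc) linarith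
  then show ?thesis using Y11_diag by (simp add: zdigit_def ydigit_def algebra_simps)
next
  case (Z1 k)
  have "(2::real)^k < 2^L" using Z1 by simp
  also have "\<dots> \<le> (2^L)^2" by (simp add: power2_eq_square)
  finally have "3 * 2^k * real n * Bc n L < Yc n L"
    by (intro less_Yc) simp
  moreover have "2^k * 3 * real (Bc n L) \<le> 3 * 2^k * real n * Bc n L"
    using n_pos by (simp add: mult_right_mono)
  ultimately show ?thesis using Z1 by (simp add: zdigit_def ydigit_def algebra_simps)
qed

lemma ydigit_le_Tc: "ydigit L f x \<le> Tc L"
proof -
  have "ydigit L f x \<le> (\<Sum>p\<in>{..<L} \<times> {..<L}. 3 ^ f p)"
    unfolding ydigit_def by (intro sum_mono2) auto
  also have "\<dots> = Tc L"
    unfolding Tc_def using sum.reindex_bij_betw[OF f_bij, of "\<lambda>m. 3 ^ m"] by simp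
  finally show ?thesis .
qed

lemma Yc_mult_Suc_ydigit_le_Zc: "real (Yc n L) * (ydigit L f x + 1) \<le> Zc n L"
proof -
  have "1 \<le> L^2 * Yc n L"
    using L_pos Yc_pos by simp
  have "ydigit L f x + 1 \<le> 3 ^ (L^2)"
    using ydigit_le_Tc[of x] sum_powers_of_3_less[of "L^2"] unfolding Tc_def by linarith
  then have "Yc n L * (ydigit L f x + 1) \<le> Yc n L * 3 ^ (L^2)"
    by (rule mult_left_mono) simp
  also have "\<dots> \<le> Yc n L * 3 ^ (L^2) * (L^2 * Yc n L)"
    using \<open>1 \<le> L^2 * Yc n L\<close> by simp
  also have "\<dots> = Zc n L"
    unfolding Zc_def by (simp add: power2_eq_square ac_simps)
  finally show ?thesis
    by (metis of_nat_le_iff of_nat_mult)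
qed

lemma floors_eq_digits:
  assumes "x \<in> items"
  shows "wZ n L a f x = zdigit L x" "pZ n L a f x = zdigit L x"
    and "wY n L a f x = ydigit L f x" "pY n L a f x = ydigit L f x"
proof -
  note lower = weight_ge_digits[OF assms, where a = a and f = f] and upper = profit_less_digits[OF assms]
  note wt_pr = wt_le_pr[of n L a f x]
  show "wZ n L a f x = zdigit L x" "wY n L a f x = ydigit L f x"
    using floor_mixed_radix[OF lower _ Yc_mult_Suc_ydigit_le_Zc] upper wt_pr by (auto simp: wZ_def wY_def)
  show "pZ n L a f x = zdigit L x" "pY n L a f x = ydigit L f x"
    using floor_mixed_radix[OF _ upper Yc_mult_Suc_ydigit_le_Zc] lower wt_pr by (auto simp: pZ_def pY_def)
qed

lemma column_counts_eq_1:
  assumes S: "S \<subseteq> items"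
    and wZS: "(\<Sum>x\<in>S. wZ n L a f x) \<le> 2^L - 1" and pZS: "(\<Sum>x\<in>S. pZ n L a f x) \<ge> 2^L - 1"
    and wYS: "(\<Sum>x\<in>S. wY n L a f x) \<le> Tc L" and pYS: "(\<Sum>x\<in>S. pY n L a f x) \<ge> Tc L"
  shows "\<forall>k<L. card (S \<inter> zcolumn k) = 1"
    and "\<forall>p\<in>{..<L} \<times> {..<L}. card (S \<inter> ycolumn p) = 1"
proof -
  have "finite S" using finite_items finite_subset S by blast
  have in_items: "x \<in> items" if "x \<in> S" for x using S that by blast
  have "int (\<Sum>x\<in>S. zdigit L x) = (\<Sum>x\<in>S. wZ n L a f x)"
    "int (\<Sum>x\<in>S. zdigit L x) = (\<Sum>x\<in>S. pZ n L a f x)"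
    "int (\<Sum>x\<in>S. ydigit L f x) = (\<Sum>x\<in>S. wY n L a f x)"
    "int (\<Sum>x\<in>S. ydigit L f x) = (\<Sum>x\<in>S. pY n L a f x)"
    using in_items by (simp_all add: of_nat_sum floors_eq_digits cong: sum.cong)
  moreover have "(2::int)^L - 1 = int (2^L - 1)"
    by (simp add: of_nat_diff)
  ultimately have zsum: "(\<Sum>x\<in>S. zdigit L x) = 2^L - 1"
    and ysum: "(\<Sum>x\<in>S. ydigit L f x) = Tc L"
    using wZS pZS wYS pYS by linarith+
  have zcols: "{x\<in>S. k \<in> zpositions x} = S \<inter> zcolumn k" for k
    using zpositions_iff_zcolumn[OF in_items] by blast
  have ycols: "{x\<in>S. p \<in> ypositions x} = S \<inter> ycolumn p" for p
    using ypositions_iff_ycolumn[OF in_items] by blast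
  show "\<forall>k<L. card (S \<inter> zcolumn k) = 1"
  proof (rule repunit_digits_eq_1[of 2])
    show "\<forall>k<L. card (S \<inter> zcolumn k) \<le> 2"
      using card_Int_zcolumn_le by blast
    have "(\<Sum>k<L. card (S \<inter> zcolumn k) * 2^k) = (\<Sum>x\<in>S. zdigit L x)"
      unfolding zdigit_def zcols[symmetric]
      by (rule sum_sum_incidence[symmetric, OF \<open>finite S\<close>]) simp
    then show "(\<Sum>k<L. card (S \<inter> zcolumn k) * 2^k) = (\<Sum>k<L. 2^k)"
      using zsum by (simp add: lessThan_atLeast0 sum_power2)
  qed simp
  show "\<forall>p\<in>{..<L} \<times> {..<L}. card (S \<inter> ycolumn p) = 1"
  proof (rule repunit_digits_eq_1_reindex[of 3, OF _ f_bij])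
    show "\<forall>p\<in>{..<L} \<times> {..<L}. card (S \<inter> ycolumn p) \<le> 3"
      using card_Int_ycolumn_le by blast
    have "(\<Sum>p\<in>{..<L} \<times> {..<L}. card (S \<inter> ycolumn p) * 3 ^ f p) = (\<Sum>x\<in>S. ydigit L f x)"
      unfolding ydigit_def ycols[symmetric]
      by (rule sum_sum_incidence[symmetric, OF \<open>finite S\<close>]) simp
    then show "(\<Sum>p\<in>{..<L} \<times> {..<L}. card (S \<inter> ycolumn p) * 3 ^ f p)
        = (\<Sum>p\<in>{..<L} \<times> {..<L}. 3 ^ f p)"
      using ysum sum.reindex_bij_betw[OF f_bij, of "\<lambda>m. (3::nat) ^ m"] by (simp add: Tc_def)
  qed simp
qed

end

lemma merging_split_pair_gains_profit:
  assumes n: "n \<ge> 1" and S: "S \<subseteq> Xset n L \<union> Yset L \<union> Zset L" and kl: "k < l" "l < L"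
    and split: "YI 1 0 k l \<in> S" "YI 0 1 k l \<in> S" "YI 1 1 k l \<notin> S"
  defines "S' \<equiv> insert (YI 1 1 k l) (S - {YI 1 0 k l, YI 0 1 k l})"
  shows "S' \<subseteq> Xset n L \<union> Yset L \<union> Zset L"
    and "(\<Sum>x\<in>S'. wt n L a f x) = (\<Sum>x\<in>S. wt n L a f x)"
    and "(\<Sum>x\<in>S'. pr n L a f x) > (\<Sum>x\<in>S. pr n L a f x)"
proof -
  have "finite S" using finite_items finite_subset S by blast
  have exchange:
    "(\<Sum>x\<in>S'. g x) = (\<Sum>x\<in>S. g x) - g (YI 1 0 k l) - g (YI 0 1 k l) + g (YI 1 1 k l)"
    for g :: "item \<Rightarrow> real"
    unfolding S'_def using \<open>finite S\<close> split by (simp add: sum_diff)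
  show "S' \<subseteq> Xset n L \<union> Yset L \<union> Zset L"
    unfolding S'_def using S kl by (auto simp: Yset_def)
  show "(\<Sum>x\<in>S'. wt n L a f x) = (\<Sum>x\<in>S. wt n L a f x)"
    using exchange[of "wt n L a f"] kl by (simp add: algebra_simps)
  have "0 < 2^(k+l) * 9 * real n * Bc n L"
    using n Bc_ge(3)[OF n, of L] by simp
  then show "(\<Sum>x\<in>S'. pr n L a f x) > (\<Sum>x\<in>S. pr n L a f x)"
    using exchange[of "pr n L a f"] kl by (simp add: algebra_simps)
qed

lemma index_from_column_counts:
  assumes zc: "\<forall>k<L. card (S \<inter> zcolumn k) = 1"
    and yc: "\<forall>p\<in>{..<L} \<times> {..<L}. card (S \<inter> ycolumn p) = 1"
    and merged: "\<forall>k l. k < l \<longrightarrow> l < L \<longrightarrow> YI 1 0 k l \<in> S \<longrightarrow> YI 0 1 k l \<in> S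
                   \<longrightarrow> YI 1 1 k l \<in> S"
  shows "\<exists>i<2^L. S \<inter> Yset L = Yi L i \<and> S \<inter> Zset L = Zi L i"
proof -
  define s where "s k \<longleftrightarrow> ZI 1 k \<in> S" for k
  define i :: nat where "i = horner_sum of_bool 2 (map s [0..<L])"
  have "i < 2^L"
    unfolding i_def using horner_sum_bits_less[of "map s [0..<L]"] by simp
  have bit: "bitd i k = of_bool (s k)" if "k < L" for k
    unfolding i_def using that by (simp add: bitd_horner_sum)
  have z0: "ZI 0 k \<in> S \<longleftrightarrow> \<not> s k" if "k < L" for k
    using zc that card_Int_pair_eq_1[of "ZI 0 k" "ZI 1 k" S] by (simp add: zcolumn_def s_def)
  have y_diag: "YI 1 1 k k \<in> S \<longleftrightarrow> s k" if "k < L" for k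
  proof -
    have "card (S \<inter> ycolumn (k, k)) = 1"
      using yc that by blast
    then show ?thesis
      using z0[OF that] card_Int_pair_eq_1[of "ZI 0 k" "YI 1 1 k k" S] by simp
  qed
  have y_off: "(YI 1 0 k l \<in> S \<longleftrightarrow> s k \<and> \<not> s l) \<and> (YI 0 1 k l \<in> S \<longleftrightarrow> \<not> s k \<and> s l)
      \<and> (YI 1 1 k l \<in> S \<longleftrightarrow> s k \<and> s l)" if "k < l" "l < L" for k l
  proof -
    have "(k, l) \<in> {..<L} \<times> {..<L}" "(l, k) \<in> {..<L} \<times> {..<L}"
      using that by auto
    then have "card (S \<inter> ycolumn (k, l)) = 1" "card (S \<inter> ycolumn (l, k)) = 1"
      using yc by blast+
    then show ?thesis
      using that merged z0[of k] z0[of l]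
        card_Int_triple_eq_1[of "ZI 0 k" "YI 1 0 k l" "YI 1 1 k l" S]
        card_Int_triple_eq_1[of "ZI 0 l" "YI 0 1 k l" "YI 1 1 k l" S]
      by auto
  qed
  have "Zi L i = {ZI (of_bool (s k)) k | k. k < L}"
    using bit by (auto simp: Zi_def)
  then have "S \<inter> Zset L = Zi L i"
    using z0 by (auto simp: Zset_def s_def)
  moreover have "S \<inter> Yset L = Yi L i"
    using y_off y_diag bit by (auto simp: Yset_def Yi_def le_less)
  ultimately show ?thesis
    using \<open>i < 2^L\<close> by blast
qed

theorem lemma6:
  fixes n t L :: nat
    and a :: "nat \<Rightarrow> nat \<Rightarrow> nat"
    and f :: "nat \<times> nat \<Rightarrow> nat"
    and S :: "item set"
  assumes n: "n \<ge> 1"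
    and t: "t = 2 ^ L"
    and A: "\<forall>i<t. (\<forall>j\<in>{1..3*n}. a i j \<in> Atilde n) \<and> inj_on (a i) {1..3*n}
                    \<and> (\<Sum>j=1..3*n. a i j) = 3 * Bn n"
    and f: "bij_betw f ({..<L} \<times> {..<L}) {..<L^2}"
    and S: "S \<subseteq> Xset n L \<union> Yset L \<union> Zset L"
    and wZS: "(\<Sum>x\<in>S. wZ n L a f x) \<le> int t - 1"
    and wYS: "(\<Sum>x\<in>S. wY n L a f x) \<le> int (Tc L)"
    and pZS: "(\<Sum>x\<in>S. pZ n L a f x) \<ge> int t - 1"
    and pYS: "(\<Sum>x\<in>S. pY n L a f x) \<ge> int (Tc L)"
    and opt: "\<not> (\<exists>S'. S' \<subseteq> Xset n L \<union> Yset L \<union> Zset L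
                 \<and> (\<Sum>x\<in>S'. wt n L a f x) \<le> (\<Sum>x\<in>S. wt n L a f x)
                 \<and> (\<Sum>x\<in>S'. pr n L a f x) > (\<Sum>x\<in>S. pr n L a f x))"
  shows "\<exists>i<t. S \<inter> Yset L = Yi L i \<and> S \<inter> Zset L = Zi L i"
proof -
  have columns: "(\<forall>k<L. card (S \<inter> zcolumn k) = 1)
    \<and> (\<forall>p\<in>{..<L} \<times> {..<L}. card (S \<inter> ycolumn p) = 1)"
  proof (cases "L = 0")
    case False
    then interpret knapsack_instance n L a f
      using n A f t by unfold_locales auto
    show ?thesis
      using column_counts_eq_1[OF S] wZS wYS pZS pYS t by simp
  qed simp
  have "YI 1 1 k l \<in> S" if "k < l" "l < L" "YI 1 0 k l \<in> S" "YI 0 1 k l \<in> S" for k l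
    using merging_split_pair_gains_profit[OF n S that] opt by (metis order_refl)
  then show ?thesis
    using index_from_column_counts columns t by blast
qed

end
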